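(* For every positive integer $k$ there exists a scoring rule $f$ (assigning to each item $i$ of an instance a score $f(i,\mathcal{A}_n)\ge 0$, not required to depend on the approval profile) such that the price of justified representation $P(k,f)=\sup_{\mathcal{I}_{m,\mathcal{A}_n,k}} P(\mathcal{I}_{m,\mathcal{A}_n,k},f)$ is unbounded (i.e. equals $+\infty$).
   Context: An instance $\mathcal{I}_{m,\mathcal{A}_n,k}=\langle m,\mathcal{A}_n,k\rangle$ consists of a set of items (comments) $[m]=\{1,\dots,m\}$, a set of users $[n]$, an approval profile $\mathcal{A}_n=(A_1,\dots,A_n)$ with $A_u\subseteq[m]$ the set of items approved by user $u$, and a target size $k\le m$. A scoring rule assigns each item $i$ a score $f(i,\mathcal{A}_n)\ge 0$; scores of sets are additive: $f(S)=\sum_{i\in S}f(i,\mathcal{A}_n)$. A group of users $G\subseteq[n]$ is cohesive if $\bigcap_{u\in G}A_u\neq\emptyset$. A set $S\subseteq[m]$ represents $G$ if some $u\in G$ has $A_u\cap S\neq\emptyset$. A set $S$ satisfies justified representation (JR) if $|S|=k$ and $S$ represents every cohesive group of at least $n/k$ users. Let $S^*$ be a set maximizing $f(S)$ over all $S\subseteq[m]$ with $|S|=k$, and $S^*_{JR}$ a set maximizing $f(S)$ over all sets satisfying JR. The price of JR on an instance is $P(\mathcal{I}_{m,\mathcal{A}_n,k},f)=f(S^* )/f(S^*_{JR})$, and $P(k,f)=\max_{\mathcal{I}_{m,\mathcal{A}_n,k}}P(\mathcal{I}_{m,\mathcal{A}_n,k},f)$ over all instances with set size $k$. *)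

theory Defs
  imports "HOL-Library.Extended_Real"
begin

text \<open>An approval profile is a list \<open>A\<close> of length n; user u (0 \<le> u < n) approves
  the set \<open>A ! u\<close>.\<close>

type_synonym profile = "nat set list"
type_synonym scoring_rule = "nat \<Rightarrow> profile \<Rightarrow> real"

definition users :: "profile \<Rightarrow> nat set" where
  "users A = {0..<length A}"

definition valid_instance :: "nat \<Rightarrow> profile \<Rightarrow> nat \<Rightarrow> bool" where
  "valid_instance m A k \<longleftrightarrow> length A \<ge> 1 \<and> k \<le> m \<and> (\<forall>u<length A. A ! u \<subseteq> {1..m})"

definition set_score :: "scoring_rule \<Rightarrow> profile \<Rightarrow> nat set \<Rightarrow> real" where
  "set_score f A S = (\<Sum>i\<in>S. f i A)"

definition cohesive :: "profile \<Rightarrow> nat set \<Rightarrow> bool" where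
  "cohesive A G \<longleftrightarrow> (\<Inter>u\<in>G. A ! u) \<noteq> {}"

definition represents :: "profile \<Rightarrow> nat set \<Rightarrow> nat set \<Rightarrow> bool" where
  "represents A S G \<longleftrightarrow> (\<exists>u\<in>G. A ! u \<inter> S \<noteq> {})"

definition satisfies_JR :: "nat \<Rightarrow> profile \<Rightarrow> nat \<Rightarrow> nat set \<Rightarrow> bool" where
  "satisfies_JR m A k S \<longleftrightarrow> S \<subseteq> {1..m} \<and> card S = k \<and>
     (\<forall>G. G \<subseteq> users A \<and> G \<noteq> {} \<and> cohesive A G \<and> real (card G) \<ge> real (length A) / real k
          \<longrightarrow> represents A S G)"

definition opt_score :: "scoring_rule \<Rightarrow> nat \<Rightarrow> profile \<Rightarrow> nat \<Rightarrow> real" where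
  "opt_score f m A k = Max (set_score f A ` {S. S \<subseteq> {1..m} \<and> card S = k})"

definition opt_JR_score :: "scoring_rule \<Rightarrow> nat \<Rightarrow> profile \<Rightarrow> nat \<Rightarrow> real" where
  "opt_JR_score f m A k = Max (set_score f A ` {S. satisfies_JR m A k S})"

text \<open>Price of JR on an instance, as an extended real: x/0 = \<infinity> for x > 0.\<close>
definition price_inst :: "nat \<Rightarrow> profile \<Rightarrow> nat \<Rightarrow> scoring_rule \<Rightarrow> ereal" where
  "price_inst m A k f = ereal (opt_score f m A k) / ereal (opt_JR_score f m A k)"

definition price :: "nat \<Rightarrow> scoring_rule \<Rightarrow> ereal" where
  "price k f = (SUP (m, A) \<in> {(m, A). valid_instance m A k}. price_inst m A k f)"

end

theory Submission
  imports Defs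
begin

text \<open>Let the score reward only item \<open>k + 1\<close>, independently of the profile, and let
  \<open>k\<close> users each approve a different one of the items \<open>1, \<dots>, k\<close>. Then \<open>n / k = 1\<close>, so
  every single user is a cohesive group that JR must represent; hence the only JR set is
  \<open>{1..k}\<close>, of score 0, whereas \<open>{2..k+1}\<close> has score 1. The price of this instance is
  \<open>1 / 0 = \<infinity>\<close>.\<close>

lemma price_inst_le_price:
  assumes "valid_instance m A k"
  shows "price_inst m A k f \<le> price k f"
  unfolding price_def
  using SUP_upper[of "(m, A)" "{(m, A). valid_instance m A k}" "\<lambda>(m, A). price_inst m A k f"] assms
  by simp

lemma price_inst_eq_infinity:
  assumes "opt_JR_score f m A k = 0" and "opt_score f m A k > 0"
  shows "price_inst m A k f = \<infinity>"
  using assms by (simp add: price_inst_def divide_ereal_def)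

lemma set_score_le_opt_score:
  assumes "S \<subseteq> {1..m}" and "card S = k"
  shows "set_score f A S \<le> opt_score f m A k"
proof -
  have "finite {S. S \<subseteq> {1..m} \<and> card S = k}"
    by (rule finite_subset[of _ "Pow {1..m}"]) auto
  then show ?thesis
    unfolding opt_score_def using assms by (intro Max_ge) auto
qed

lemma opt_JR_score_unique:
  assumes "{S. satisfies_JR m A k S} = {T}"
  shows "opt_JR_score f m A k = set_score f A T"
  unfolding opt_JR_score_def assms by simp

definition singleton_profile :: "nat \<Rightarrow> profile" where
  "singleton_profile k = map (\<lambda>u. {u + 1}) [0..<k]"

lemma length_singleton_profile [simp]: "length (singleton_profile k) = k"
  by (simp add: singleton_profile_def)

lemma nth_singleton_profile [simp]: "u < k \<Longrightarrow> singleton_profile k ! u = {u + 1}"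
  by (simp add: singleton_profile_def)

lemma valid_instance_singleton_profile:
  assumes "1 \<le> k" and "k \<le> m"
  shows "valid_instance m (singleton_profile k) k"
  using assms by (auto simp: valid_instance_def)

lemma satisfies_JR_singleton_profile_iff:
  assumes "k \<le> m"
  shows "satisfies_JR m (singleton_profile k) k S \<longleftrightarrow> S = {1..k}"
proof
  assume JR: "satisfies_JR m (singleton_profile k) k S"
  have "x \<in> S" if "x \<in> {1..k}" for x
  proof -
    have u: "x - 1 < k" "x = x - 1 + 1"
      using that by auto
    then have "represents (singleton_profile k) S {x - 1}"
      using JR by (auto simp: satisfies_JR_def users_def cohesive_def)
    then show "x \<in> S"
      using u by (auto simp: represents_def)
  qed
  moreover have "finite S" and "card S = card {1..k}"
    using JR by (auto simp: satisfies_JR_def intro: finite_subset)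
  ultimately show "S = {1..k}"
    by (metis card_subset_eq finite_atLeastAtMost subsetI)
next
  assume S: "S = {1..k}"
  have "represents (singleton_profile k) {1..k} G"
    if "G \<subseteq> users (singleton_profile k)" "G \<noteq> {}" for G
    using that by (fastforce simp: represents_def users_def)
  then show "satisfies_JR m (singleton_profile k) k S"
    using S assms by (auto simp: satisfies_JR_def)
qed

theorem proposition1:
  fixes k :: nat
  assumes "k \<ge> 1"
  shows "\<exists>f :: scoring_rule. (\<forall>i A. f i A \<ge> 0) \<and> price k f = \<infinity>"
proof -
  define f :: scoring_rule where "f = (\<lambda>i _. if i = k + 1 then 1 else 0)"
  let ?A = "singleton_profile k"
  have "{S. satisfies_JR (k + 1) ?A k S} = {{1..k}}"
    using satisfies_JR_singleton_profile_iff[of k "k + 1"] by auto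
  then have "opt_JR_score f (k + 1) ?A k = 0"
    by (simp add: opt_JR_score_unique set_score_def f_def)
  moreover have "set_score f ?A {2..k + 1} = 1"
    using assms by (simp add: set_score_def f_def)
  then have "opt_score f (k + 1) ?A k > 0"
    using set_score_le_opt_score[of "{2..k + 1}" "k + 1" k f ?A] by simp
  ultimately have "price_inst (k + 1) ?A k f = \<infinity>"
    by (rule price_inst_eq_infinity)
  then have "price k f = \<infinity>"
    using price_inst_le_price[of "k + 1" ?A k f] valid_instance_singleton_profile[OF assms]
    by (simp add: top_unique)
  moreover have "\<forall>i A. f i A \<ge> 0"
    by (simp add: f_def)
  ultimately show ?thesis
    by blast
qed

end
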